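(* Let $X$ and $Y$ be sets of points in a tree with $|X|=|Y|$, and let $r\in X$. Then there exists a minimum cost perfect matching of $X$ to $Y$ (cost = sum of tree distances of matched pairs) that is $r$-local, i.e., in which $r$ is matched to a point $y\in Y$ such that the path $\mathcal{P}(r,y)$ contains no point of $Y$ other than $y$.
   Context: The tree carries its path metric $d$; $\mathcal{P}(v,w)$ denotes the unique path between points $v$ and $w$. *)

theory Defs
  imports Complex_Main
begin

definition is_path :: "('a \<times> 'a) set \<Rightarrow> 'a \<Rightarrow> 'a \<Rightarrow> 'a list \<Rightarrow> bool" where
  "is_path E u v p \<longleftrightarrow> p \<noteq> [] \<and> hd p = u \<and> last p = v \<and> distinct p \<and>
     (\<forall>i < length p - 1. (p ! i, p ! Suc i) \<in> E)"

definition weighted_tree :: "'a set \<Rightarrow> ('a \<times> 'a) set \<Rightarrow> ('a \<Rightarrow> 'a \<Rightarrow> real) \<Rightarrow> bool" where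
  "weighted_tree V E w \<longleftrightarrow> finite V \<and> V \<noteq> {} \<and> E \<subseteq> V \<times> V \<and> sym E \<and>
     (\<forall>a. (a, a) \<notin> E) \<and>
     (\<forall>u\<in>V. \<forall>v\<in>V. \<exists>!p. is_path E u v p) \<and>
     (\<forall>(a, b)\<in>E. w a b > 0 \<and> w a b = w b a)"

definition tree_path :: "('a \<times> 'a) set \<Rightarrow> 'a \<Rightarrow> 'a \<Rightarrow> 'a list" where
  "tree_path E u v = (THE p. is_path E u v p)"

definition tree_dist :: "('a \<times> 'a) set \<Rightarrow> ('a \<Rightarrow> 'a \<Rightarrow> real) \<Rightarrow> 'a \<Rightarrow> 'a \<Rightarrow> real" where
  "tree_dist E w u v = (let p = tree_path E u v in
     (\<Sum>i < length p - 1. w (p ! i) (p ! Suc i)))"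

definition matching_cost :: "('a \<times> 'a) set \<Rightarrow> ('a \<Rightarrow> 'a \<Rightarrow> real) \<Rightarrow> 'a set \<Rightarrow> ('a \<Rightarrow> 'a) \<Rightarrow> real" where
  "matching_cost E w X f = (\<Sum>x\<in>X. tree_dist E w x (f x))"

definition min_cost_matching ::
  "('a \<times> 'a) set \<Rightarrow> ('a \<Rightarrow> 'a \<Rightarrow> real) \<Rightarrow> 'a set \<Rightarrow> 'a set \<Rightarrow> ('a \<Rightarrow> 'a) \<Rightarrow> bool" where
  "min_cost_matching E w X Y f \<longleftrightarrow> bij_betw f X Y \<and>
     (\<forall>g. bij_betw g X Y \<longrightarrow> matching_cost E w X f \<le> matching_cost E w X g)"

definition r_local :: "('a \<times> 'a) set \<Rightarrow> 'a set \<Rightarrow> 'a \<Rightarrow> ('a \<Rightarrow> 'a) \<Rightarrow> bool" where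
  "r_local E Y r f \<longleftrightarrow> (\<forall>y\<in>Y. y \<in> set (tree_path E r (f r)) \<longrightarrow> y = f r)"

end

theory Submission
  imports Defs "HOL-Library.FuncSet" "HOL-Combinatorics.Transposition"
begin

text \<open>Among the minimum cost matchings choose one in which \<open>r\<close> is matched as close to \<open>r\<close> as
  possible. If some \<open>y \<in> Y\<close> other than \<open>f r\<close> lay on \<open>\<P>(r, f r)\<close>, exchange the partners of \<open>r\<close>
  and of \<open>x' = f\<^sup>-\<^sup>1 y\<close>. Since \<open>d(r, f r) = d(r, y) + d(y, f r)\<close> and
  \<open>d(x', f r) \<le> d(x', y) + d(y, f r)\<close>, the cost does not increase, so the new matching is again
  optimal, yet matches \<open>r\<close> to the strictly closer point \<open>y\<close>.\<close>

abbreviation walk :: "('a \<times> 'a) set \<Rightarrow> 'a list \<Rightarrow> bool" where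
  "walk E \<equiv> successively (\<lambda>a b. (a, b) \<in> E)"

fun walk_weight :: "('a \<Rightarrow> 'a \<Rightarrow> real) \<Rightarrow> 'a list \<Rightarrow> real" where
  "walk_weight w [] = 0"
| "walk_weight w [a] = 0"
| "walk_weight w (a # b # xs) = w a b + walk_weight w (b # xs)"

lemma sum_edges_eq_walk_weight:
  "(\<Sum>i < length p - 1. w (p ! i) (p ! Suc i)) = walk_weight w p"
proof (induction w p rule: walk_weight.induct)
  case (3 w a b xs)
  have "(\<Sum>i < length (a # b # xs) - 1. w ((a # b # xs) ! i) ((a # b # xs) ! Suc i))
      = w a b + (\<Sum>i < length (b # xs) - 1. w ((b # xs) ! i) ((b # xs) ! Suc i))"
    by (simp add: sum.lessThan_Suc_shift del: sum.lessThan_Suc)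
  with "3.IH" show ?case by simp
qed simp_all

lemma walk_weight_append:
  "walk_weight w (xs @ y # ys) = walk_weight w (xs @ [y]) + walk_weight w (y # ys)"
proof (induction xs)
  case (Cons a xs)
  then show ?case by (cases xs) auto
qed simp

lemma walk_append_iff: "walk E (xs @ y # ys) \<longleftrightarrow> walk E (xs @ [y]) \<and> walk E (y # ys)"
  by (simp add: successively_append_iff conj_ac)

lemma is_path_iff_walk:
  "is_path E u v p \<longleftrightarrow> p \<noteq> [] \<and> hd p = u \<and> last p = v \<and> distinct p \<and> walk E p"
  by (simp add: is_path_def successively_conv_nth less_diff_conv)

lemma edge_weight_pos: "weighted_tree V E w \<Longrightarrow> (a, b) \<in> E \<Longrightarrow> w a b > 0"
  unfolding weighted_tree_def by blast

lemma walk_weight_nonneg: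
  assumes "weighted_tree V E w" "walk E p"
  shows "walk_weight w p \<ge> 0"
  using assms(2)
proof (induction p rule: induct_list012)
  case (3 a b xs)
  then have "w a b > 0" using edge_weight_pos[OF assms(1)] by simp
  with 3 show ?case by simp
qed simp_all

lemma walk_weight_pos:
  assumes "weighted_tree V E w" "walk E (a # b # xs)"
  shows "walk_weight w (a # b # xs) > 0"
proof -
  have "w a b > 0" using edge_weight_pos[OF assms(1)] assms(2) by simp
  moreover have "walk_weight w (b # xs) \<ge> 0" using walk_weight_nonneg[OF assms(1)] assms(2) by simp
  ultimately show ?thesis by simp
qed

text \<open>Cutting out the closed subwalk between two visits of the same vertex does not increase
  the weight, because weights are nonnegative.\<close>

lemma walk_contains_lighter_path:
  assumes "weighted_tree V E w" "walk E p" "p \<noteq> []"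
  shows "\<exists>q. is_path E (hd p) (last p) q \<and> walk_weight w q \<le> walk_weight w p"
  using assms(2,3)
proof (induction "length p" arbitrary: p rule: less_induct)
  case less
  show ?case
  proof (cases "distinct p")
    case True
    with less.prems show ?thesis by (auto simp: is_path_iff_walk)
  next
    case False
    then obtain xs ys zs y where p: "p = xs @ [y] @ ys @ [y] @ zs"
      using not_distinct_decomp by blast
    define p' where "p' = xs @ y # zs"
    have "walk E (xs @ [y])" "walk E (y # ys @ [y])" "walk E (y # zs)"
      using less.prems(1) walk_append_iff[of E xs y "ys @ y # zs"]
        walk_append_iff[of E "y # ys" y zs] unfolding p by auto
    then have "walk E p'" unfolding p'_def using walk_append_iff[of E xs y zs] by blast
    have "walk_weight w p = walk_weight w p' + walk_weight w (y # ys @ [y])"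
      using walk_weight_append[of w xs y "ys @ y # zs"] walk_weight_append[of w "y # ys" y zs]
        walk_weight_append[of w xs y zs]
      unfolding p p'_def by simp
    moreover have "walk_weight w (y # ys @ [y]) \<ge> 0"
      using walk_weight_nonneg[OF assms(1) \<open>walk E (y # ys @ [y])\<close>] .
    ultimately have le: "walk_weight w p' \<le> walk_weight w p" by simp
    have "length p' < length p" "p' \<noteq> []" unfolding p'_def p by simp_all
    with less.hyps \<open>walk E p'\<close> obtain q
      where "is_path E (hd p') (last p') q" "walk_weight w q \<le> walk_weight w p'"
      by blast
    moreover have "hd p' = hd p" "last p' = last p"
      unfolding p'_def p by (cases xs; simp) (cases zs; simp)
    ultimately show ?thesis using le by force
  qed
qed

lemma tree_path_is_path:
  assumes "weighted_tree V E w" "u \<in> V" "v \<in> V"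
  shows "is_path E u v (tree_path E u v)"
  using assms theI'[of "is_path E u v"] unfolding weighted_tree_def tree_path_def by blast

lemma tree_path_unique:
  assumes "weighted_tree V E w" "u \<in> V" "v \<in> V" "is_path E u v p"
  shows "p = tree_path E u v"
  using assms tree_path_is_path[OF assms(1-3)] unfolding weighted_tree_def by blast

lemma set_tree_path_subset:
  assumes "weighted_tree V E w" "u \<in> V" "v \<in> V"
  shows "set (tree_path E u v) \<subseteq> V"
proof
  fix x assume "x \<in> set (tree_path E u v)"
  then obtain i where i: "i < length (tree_path E u v)" "x = tree_path E u v ! i"
    by (auto simp: in_set_conv_nth)
  have path: "is_path E u v (tree_path E u v)" using tree_path_is_path[OF assms] .
  show "x \<in> V"
  proof (cases i)
    case 0
    with i path assms(2) show ?thesis by (simp add: is_path_def hd_conv_nth)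
  next
    case (Suc j)
    with i path have "(tree_path E u v ! j, x) \<in> E" by (simp add: is_path_def)
    with assms(1) show ?thesis unfolding weighted_tree_def by blast
  qed
qed

lemma tree_dist_eq_walk_weight: "tree_dist E w u v = walk_weight w (tree_path E u v)"
  unfolding tree_dist_def Let_def by (rule sum_edges_eq_walk_weight)

lemma tree_dist_pos:
  assumes "weighted_tree V E w" "u \<in> V" "v \<in> V" "u \<noteq> v"
  shows "tree_dist E w u v > 0"
proof -
  have path: "is_path E u v (tree_path E u v)" using tree_path_is_path[OF assms(1-3)] .
  then have "tree_path E u v \<noteq> []" "hd (tree_path E u v) = u" "last (tree_path E u v) = v"
    and walk: "walk E (tree_path E u v)"
    unfolding is_path_iff_walk by simp_all
  then obtain a q where aq: "tree_path E u v = a # q" by (meson neq_Nil_conv)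
  have "q \<noteq> []"
  proof
    assume "q = []"
    with aq \<open>hd (tree_path E u v) = u\<close> \<open>last (tree_path E u v) = v\<close> have "u = v" by simp
    with assms(4) show False ..
  qed
  then obtain b xs where bxs: "q = b # xs" by (meson neq_Nil_conv)
  from walk have "walk E (a # b # xs)" unfolding aq bxs .
  then have "walk_weight w (a # b # xs) > 0" by (rule walk_weight_pos[OF assms(1)])
  then show ?thesis unfolding tree_dist_eq_walk_weight aq bxs .
qed

lemma tree_dist_triangle:
  assumes "weighted_tree V E w" "a \<in> V" "b \<in> V" "c \<in> V"
  shows "tree_dist E w a c \<le> tree_dist E w a b + tree_dist E w b c"
proof -
  have p1: "is_path E a b (tree_path E a b)" using tree_path_is_path[OF assms(1-3)] .
  have p2: "is_path E b c (tree_path E b c)" using tree_path_is_path[OF assms(1,3,4)] .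
  have "tree_path E a b \<noteq> []" "last (tree_path E a b) = b"
    using p1 unfolding is_path_def by simp_all
  then obtain A where A: "tree_path E a b = A @ [b]" by (metis append_butlast_last_id)
  have "tree_path E b c \<noteq> []" "hd (tree_path E b c) = b"
    using p2 unfolding is_path_def by simp_all
  then obtain B where B: "tree_path E b c = b # B" by (metis list.collapse)
  define p where "p = A @ b # B"
  have "walk E p" using p1 p2 walk_append_iff[of E A b B]
    unfolding p_def is_path_iff_walk A B by blast
  moreover have "hd p = a"
    using p1 unfolding p_def is_path_def A by (cases A) simp_all
  moreover have "last p = c"
    using p2 unfolding p_def is_path_def B by simp
  moreover have "p \<noteq> []" unfolding p_def by simp
  ultimately obtain q where "is_path E a c q" and q: "walk_weight w q \<le> walk_weight w p"
    using walk_contains_lighter_path[OF assms(1)] by metis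
  then have "q = tree_path E a c" using tree_path_unique[OF assms(1,2,4)] by blast
  with q show ?thesis
    unfolding tree_dist_eq_walk_weight A B p_def walk_weight_append[of w A b B] by simp
qed

lemma tree_dist_split:
  assumes "weighted_tree V E w" "r \<in> V" "y \<in> V" "y' \<in> set (tree_path E r y)"
  shows "tree_dist E w r y = tree_dist E w r y' + tree_dist E w y' y"
proof -
  have path: "is_path E r y (tree_path E r y)" using tree_path_is_path[OF assms(1-3)] .
  obtain A B where AB: "tree_path E r y = A @ y' # B" using assms(4) split_list by metis
  have y'V: "y' \<in> V" using set_tree_path_subset[OF assms(1-3)] assms(4) by blast
  have "walk E (A @ [y'])" "walk E (y' # B)"
    using path walk_append_iff[of E A y' B] unfolding AB is_path_iff_walk by blast+
  then have "is_path E r y' (A @ [y'])" "is_path E y' y (y' # B)"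
    using path unfolding AB is_path_iff_walk by (cases A; auto)+
  then have "A @ [y'] = tree_path E r y'" "y' # B = tree_path E y' y"
    using tree_path_unique[OF assms(1,2) y'V] tree_path_unique[OF assms(1) y'V assms(3)]
    by blast+
  moreover have "walk_weight w (tree_path E r y) = walk_weight w (A @ [y']) + walk_weight w (y' # B)"
    unfolding AB by (rule walk_weight_append)
  ultimately show ?thesis unfolding tree_dist_eq_walk_weight by simp
qed

lemma matching_cost_restrict: "matching_cost E w X (restrict f X) = matching_cost E w X f"
  unfolding matching_cost_def by (rule sum.cong) auto

lemma matching_cost_transpose:
  assumes "finite X" "a \<in> X" "b \<in> X"
  shows "matching_cost E w X (f \<circ> transpose a b) + tree_dist E w a (f a) + tree_dist E w b (f b)
       = matching_cost E w X f + tree_dist E w a (f b) + tree_dist E w b (f a)"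
proof (cases "a = b")
  case False
  have split: "matching_cost E w X g
      = tree_dist E w a (g a) + tree_dist E w b (g b) + (\<Sum>x\<in>X - {a, b}. tree_dist E w x (g x))"
    for g
  proof -
    have "X - {a} - {b} = X - {a, b}" by blast
    with assms False show ?thesis
      unfolding matching_cost_def by (simp add: sum.remove[of X a] sum.remove[of "X - {a}" b])
  qed
  have "(\<Sum>x\<in>X - {a, b}. tree_dist E w x ((f \<circ> transpose a b) x))
      = (\<Sum>x\<in>X - {a, b}. tree_dist E w x (f x))"
    by (rule sum.cong) (auto simp: transpose_def)
  then show ?thesis using split[of f] split[of "f \<circ> transpose a b"] by simp
qed simp

lemma ex_min_cost_matching_minimizing_at:
  fixes \<phi> :: "'a \<Rightarrow> real"
  assumes "finite X" "finite Y" "card X = card Y" "r \<in> X"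
  shows "\<exists>f. min_cost_matching E w X Y f \<and>
           (\<forall>g. min_cost_matching E w X Y g \<longrightarrow> \<phi> (f r) \<le> \<phi> (g r))"
proof -
  define cost where "cost = matching_cost E w X"
  define M where "M = {f \<in> X \<rightarrow>\<^sub>E Y. bij_betw f X Y}"
  have restrict_in_M: "restrict g X \<in> M" if "bij_betw g X Y" for g
    using that bij_betw_imp_funcset[OF that] by (simp add: M_def)
  have fin: "finite M" unfolding M_def using finite_PiE[OF assms(1), of "\<lambda>_. Y"] assms(2) by simp
  have ne: "M \<noteq> {}" using finite_same_card_bij[OF assms(1-3)] restrict_in_M by blast
  have min_in_M: "arg_min_on cost M \<in> M" "\<forall>g\<in>M. cost (arg_min_on cost M) \<le> cost g"
    using arg_min_if_finite(1)[OF fin ne] arg_min_least[OF fin ne] by auto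
  define C where "C = {f \<in> M. \<forall>g\<in>M. cost f \<le> cost g}"
  have optimal: "min_cost_matching E w X Y f" if "f \<in> C" for f
    unfolding min_cost_matching_def
  proof (intro conjI allI impI)
    show "bij_betw f X Y" using that unfolding C_def M_def by blast
    fix g assume "bij_betw g X Y"
    then have "cost f \<le> cost (restrict g X)" using that restrict_in_M unfolding C_def by blast
    then show "matching_cost E w X f \<le> matching_cost E w X g"
      unfolding cost_def matching_cost_restrict .
  qed
  have "finite C" using fin unfolding C_def by simp
  moreover have "C \<noteq> {}" using min_in_M unfolding C_def by blast
  ultimately have f: "arg_min_on (\<lambda>g. \<phi> (g r)) C \<in> C"
    and least: "\<And>g. g \<in> C \<Longrightarrow> \<phi> (arg_min_on (\<lambda>g. \<phi> (g r)) C r) \<le> \<phi> (g r)"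
    using arg_min_if_finite(1) arg_min_least[where f = "\<lambda>g. \<phi> (g r)"] by simp_all
  have "\<phi> (arg_min_on (\<lambda>g. \<phi> (g r)) C r) \<le> \<phi> (g r)" if g: "min_cost_matching E w X Y g" for g
  proof -
    have "restrict g X \<in> M" using restrict_in_M g unfolding min_cost_matching_def by blast
    moreover have "cost (restrict g X) \<le> cost h" if "h \<in> M" for h
      using g that unfolding cost_def matching_cost_restrict min_cost_matching_def M_def by blast
    ultimately have "restrict g X \<in> C" unfolding C_def by blast
    with least[of "restrict g X"] assms(4) show ?thesis by simp
  qed
  with optimal[OF f] show ?thesis by blast
qed

lemma matching_exchange_along_path:
  assumes tree: "weighted_tree V E w" and "X \<subseteq> V" "Y \<subseteq> V"
    and f: "bij_betw f X Y" and r: "r \<in> X"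
    and y: "y \<in> Y" "y \<in> set (tree_path E r (f r))"
  shows "\<exists>g. bij_betw g X Y \<and> g r = y \<and> matching_cost E w X g \<le> matching_cost E w X f"
proof -
  define x' where "x' = inv_into X f y"
  have x': "x' \<in> X" "f x' = y"
    unfolding x'_def using f y(1) by (auto simp: bij_betw_def inv_into_into f_inv_into_f)
  have "f r \<in> Y" using f r by (auto dest: bij_betwE)
  have in_V: "r \<in> V" "x' \<in> V" "y \<in> V" "f r \<in> V" using assms x' \<open>f r \<in> Y\<close> by blast+
  have "finite X" using tree \<open>X \<subseteq> V\<close> finite_subset unfolding weighted_tree_def by blast
  define g where "g = f \<circ> transpose r x'"
  have "bij_betw g X Y" unfolding g_def by (rule bij_betw_trans[OF _ f]) (simp add: r x')
  moreover have "g r = y" unfolding g_def using x' by simp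
  moreover have "matching_cost E w X g \<le> matching_cost E w X f"
    using matching_cost_transpose[OF \<open>finite X\<close> r x'(1), of E w f]
      tree_dist_split[OF tree in_V(1,4) y(2)] tree_dist_triangle[OF tree in_V(2,3,4)]
    unfolding g_def x'(2) by linarith
  ultimately show ?thesis by blast
qed

theorem lemma3:
  fixes V :: "'a set" and E :: "('a \<times> 'a) set" and w :: "'a \<Rightarrow> 'a \<Rightarrow> real"
    and X Y :: "'a set" and r :: 'a
  assumes "weighted_tree V E w"
    and "X \<subseteq> V" and "Y \<subseteq> V" and "card X = card Y"
    and "r \<in> X"
  shows "\<exists>f. min_cost_matching E w X Y f \<and> r_local E Y r f"
proof -
  have "finite X" "finite Y"
    using assms(1-3) finite_subset unfolding weighted_tree_def by blast+
  then obtain f where opt: "min_cost_matching E w X Y f"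
    and closest: "\<And>g. min_cost_matching E w X Y g \<Longrightarrow> tree_dist E w r (f r) \<le> tree_dist E w r (g r)"
    using ex_min_cost_matching_minimizing_at[OF _ _ assms(4,5)] by blast
  have "y = f r" if y: "y \<in> Y" "y \<in> set (tree_path E r (f r))" for y
  proof (rule ccontr)
    assume "y \<noteq> f r"
    have f: "bij_betw f X Y" using opt unfolding min_cost_matching_def by blast
    have in_V: "r \<in> V" "y \<in> V" "f r \<in> V" using assms y f by (auto dest: bij_betwE)
    obtain g where "bij_betw g X Y" "g r = y" "matching_cost E w X g \<le> matching_cost E w X f"
      using matching_exchange_along_path[OF assms(1-3) f assms(5) y] by blast
    with opt have "min_cost_matching E w X Y g" unfolding min_cost_matching_def by force
    then have "tree_dist E w r (f r) \<le> tree_dist E w r y" using closest \<open>g r = y\<close> by force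
    moreover have "tree_dist E w r (f r) = tree_dist E w r y + tree_dist E w y (f r)"
      using tree_dist_split[OF assms(1) in_V(1,3) y(2)] .
    moreover have "tree_dist E w y (f r) > 0"
      using tree_dist_pos[OF assms(1) in_V(2,3) \<open>y \<noteq> f r\<close>] .
    ultimately show False by linarith
  qed
  with opt show ?thesis unfolding r_local_def by blast
qed

end
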